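(* Let $G=(S,T,\pi)$ be a countable two-person win-lose game such that every set in $\mathcal{B}^1(G)$ is finite, and assume $G$ satisfies one (hence all) of: (1) $\mathcal{B}^1_{\downarrow}(G)$ is ascending-union closed; (2) $\mathcal{B}^1_{\downarrow}(G)$ contains no countable strictly ascending chain; (3) $G$ is LNG-free. Then the suprema below are attained and $$\max_{\mathbf{p}\in\Delta(S)}\inf_{\mathbf{q}\in\Delta(T)}\pi^{\mathrm{mix}}(\mathbf{p},\mathbf{q})=0=\inf_{\mathbf{q}\in\Delta(T)}\max_{\mathbf{p}\in\Delta(S)}\pi^{\mathrm{mix}}(\mathbf{p},\mathbf{q}).$$
   Context: A two-person win-lose game is $G=(S,T,\pi)$ with non-empty $S,T$ and $\pi:S\times T\to\{0,1\}$; countable means $|S|=|T|=\aleph_0$. $\Delta(X)$ is the set of probability distributions on $X$ with at most countable support; $\pi^{\mathrm{mix}}(\mathbf{p},\mathbf{q})=\sum p_sq_t\pi(s,t)$. For $s\in S$, $B_s=\{t:\pi(s,t)=1\}$, $\mathcal{B}^1(G)=\{B_s:s\in S\}$, $\mathcal{B}^1_{\downarrow}(G)=\{A\subseteq T:\exists s,\ A\subseteq B_s\}$. A family $\mathcal{F}$ is ascending-union closed if $A_i\in\mathcal{F}$ with $A_1\subset A_2\subset\cdots$ implies $\bigcup_iA_i\in\mathcal{F}$. $G$ is LNG-free if there are no sequences of distinct $s_1,s_2,\ldots\in S$ and distinct $t_1,t_2,\ldots\in T$ with $\pi(s_i,t_j)=1\iff i\ge j$. *)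

theory Defs
  imports "HOL-Analysis.Analysis" "HOL-Probability.Probability_Mass_Function"
begin

text \<open>A win-lose game is (S, T, pi) with pi :: 'a => 'b => bool (pi s t = True means payoff 1).\<close>

definition countable_game :: "'a set \<Rightarrow> 'b set \<Rightarrow> bool" where
  "countable_game S T \<longleftrightarrow> countable S \<and> infinite S \<and> countable T \<and> infinite T"

definition Delta :: "'a set \<Rightarrow> 'a pmf set" where
  "Delta X = {p. set_pmf p \<subseteq> X}"

definition pi_mix :: "('a \<Rightarrow> 'b \<Rightarrow> bool) \<Rightarrow> 'a pmf \<Rightarrow> 'b pmf \<Rightarrow> real" where
  "pi_mix \<pi> p q = (\<Sum>\<^sub>\<infinity>(s, t)\<in>UNIV. pmf p s * pmf q t * of_bool (\<pi> s t))"

definition win_set :: "'b set \<Rightarrow> ('a \<Rightarrow> 'b \<Rightarrow> bool) \<Rightarrow> 'a \<Rightarrow> 'b set" where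
  "win_set T \<pi> s = {t \<in> T. \<pi> s t}"

definition B1 :: "'a set \<Rightarrow> 'b set \<Rightarrow> ('a \<Rightarrow> 'b \<Rightarrow> bool) \<Rightarrow> 'b set set" where
  "B1 S T \<pi> = win_set T \<pi> ` S"

definition B1_down :: "'a set \<Rightarrow> 'b set \<Rightarrow> ('a \<Rightarrow> 'b \<Rightarrow> bool) \<Rightarrow> 'b set set" where
  "B1_down S T \<pi> = {A. A \<subseteq> T \<and> (\<exists>s\<in>S. A \<subseteq> win_set T \<pi> s)}"

definition ascending_union_closed :: "'b set set \<Rightarrow> bool" where
  "ascending_union_closed F \<longleftrightarrow>
     (\<forall>A :: nat \<Rightarrow> 'b set. (\<forall>i. A i \<in> F) \<and> (\<forall>i. A i \<subset> A (Suc i)) \<longrightarrow> (\<Union>i. A i) \<in> F)"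

definition no_strict_ascending_chain :: "'b set set \<Rightarrow> bool" where
  "no_strict_ascending_chain F \<longleftrightarrow>
     \<not> (\<exists>A :: nat \<Rightarrow> 'b set. (\<forall>i. A i \<in> F) \<and> (\<forall>i. A i \<subset> A (Suc i)))"

definition LNG_free :: "'a set \<Rightarrow> 'b set \<Rightarrow> ('a \<Rightarrow> 'b \<Rightarrow> bool) \<Rightarrow> bool" where
  "LNG_free S T \<pi> \<longleftrightarrow>
     \<not> (\<exists>(s :: nat \<Rightarrow> 'a) (t :: nat \<Rightarrow> 'b). inj s \<and> inj t \<and> range s \<subseteq> S \<and> range t \<subseteq> T \<and>
           (\<forall>i j. \<pi> (s i) (t j) \<longleftrightarrow> i \<ge> j))"

end

theory Submission
  imports Defs
begin

text \<open>Every mixed strategy \<open>p\<close> of the first player guarantees only \<open>0\<close>: the second player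
  answers with a pure strategy outside the win sets of a finite set of strategies carrying almost
  all of \<open>p\<close>, which exists because win sets are finite and \<open>T\<close> is infinite. For the other side,
  each of the three conditions says that the sets covered by a win set admit no infinite strictly
  ascending chain (under LNG-freeness such a chain would let one build a half graph greedily),
  so one may induct along one-point extensions of covered sets. This yields, for every \<open>q\<close>, a
  win set of maximal \<open>q\<close>-mass, i.e. a best pure reply, and, for every \<open>\<epsilon> > 0\<close>, a \<open>q\<close> giving every
  win set mass at most \<open>\<epsilon>\<close>: mix uniformly \<open>n\<close> distributions, each small on all win sets
  containing a point used by an earlier one; a win set is then large only for the first of them
  that meets it, so its mass is at most \<open>1 / n + \<epsilon> / 2\<close>.\<close>

lemma sequential_choice:
  fixes R :: "nat \<Rightarrow> (nat \<Rightarrow> 'x) \<Rightarrow> 'x \<Rightarrow> bool"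
  assumes step: "\<And>Q k. (\<And>i. i < k \<Longrightarrow> R i Q (Q i)) \<Longrightarrow> \<exists>x. R k Q x"
    and prefix: "\<And>Q Q' k x. (\<And>i. i < k \<Longrightarrow> Q i = Q' i) \<Longrightarrow> R k Q x \<Longrightarrow> R k Q' x"
  shows "\<exists>Q. \<forall>k. R k Q (Q k)"
proof -
  define P where "P n Q \<longleftrightarrow> (\<forall>i<n. R i Q (Q i))" for n Q
  define E where "E n Q Q' \<longleftrightarrow> (\<forall>i<n. Q' i = Q i)" for n and Q Q' :: "nat \<Rightarrow> 'x"
  have "\<exists>Q'. P (Suc n) Q' \<and> E n Q Q'" if "P n Q" for n Q
  proof -
    obtain x where "R n Q x"
      using step[of n Q] \<open>P n Q\<close> unfolding P_def by blast
    then have "P (Suc n) (Q(n := x))"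
      using \<open>P n Q\<close> by (auto simp: P_def less_Suc_eq intro: prefix)
    then show ?thesis by (auto simp: E_def)
  qed
  then obtain F where F: "\<And>n. P n (F n) \<and> E n (F n) (F (Suc n))"
    using dependent_nat_choice[of P E] by (auto simp: P_def)
  have agree: "F m i = F n i" if "i < n" "n \<le> m" for i m n
    using that(2)
  proof (induction m rule: dec_induct)
    case (step m)
    then show ?case using F[of m] \<open>i < n\<close> by (simp add: E_def)
  qed simp
  define Q where "Q i = F (Suc i) i" for i
  have "R k Q (Q k)" for k
  proof (rule prefix)
    show "R k (F (Suc k)) (Q k)"
      using F[of "Suc k"] by (simp add: P_def Q_def)
    show "F (Suc k) i = Q i" if "i < k" for i
      using agree[of i "Suc i" "Suc k"] that by (simp add: Q_def)
  qed
  then show ?thesis by blast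
qed

lemma less_cSUP_if_not_attained:
  fixes f :: "'x \<Rightarrow> 'y :: conditionally_complete_linorder"
  assumes "bdd_above (f ` A)" "x \<in> A" "\<And>y. y \<in> A \<Longrightarrow> \<exists>z\<in>A. f y < f z"
  shows "f x < (SUP z\<in>A. f z)"
proof -
  obtain z where "z \<in> A" "f x < f z"
    using assms(2,3) by blast
  moreover have "f z \<le> (SUP z\<in>A. f z)"
    using assms(1) \<open>z \<in> A\<close> by (rule cSUP_upper2) simp
  ultimately show ?thesis by simp
qed

lemma INF_eq_0_if_arbitrarily_small:
  fixes f :: "'x \<Rightarrow> real"
  assumes "A \<noteq> {}" "\<And>x. x \<in> A \<Longrightarrow> 0 \<le> f x" "\<And>\<epsilon>. \<epsilon> > 0 \<Longrightarrow> \<exists>x\<in>A. f x \<le> \<epsilon>"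
  shows "(INF x\<in>A. f x) = 0"
proof (rule antisym)
  show "0 \<le> (INF x\<in>A. f x)"
    using assms(1,2) by (rule cINF_greatest)
  show "(INF x\<in>A. f x) \<le> 0"
  proof (rule field_le_epsilon)
    fix \<epsilon> :: real assume "\<epsilon> > 0"
    then obtain x where x: "x \<in> A" "f x \<le> \<epsilon>" using assms(3) by blast
    have "bdd_below (f ` A)"
      using assms(2) by (intro bdd_belowI[of _ 0]) auto
    then have "(INF x\<in>A. f x) \<le> \<epsilon>"
      using x by (rule cINF_lower2)
    then show "(INF x\<in>A. f x) \<le> 0 + \<epsilon>"
      by simp
  qed
qed

section \<open>Discrete distributions\<close>

lemma exists_finite_measure_compl_less:
  fixes q :: "'b pmf"
  assumes "\<eta> > 0"
  shows "\<exists>K. finite K \<and> measure q (- K) < \<eta>"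
proof -
  have "pmf q summable_on UNIV"
    using abs_summable_equivalent pmf_abs_summable abs_summable_summable by blast
  moreover have "(\<Sum>\<^sub>\<infinity>x\<in>UNIV. pmf q x) = 1"
    using measure_pmf_conv_infsetsum[of q UNIV] by (simp add: infsetsum_infsum pmf_abs_summable)
  ultimately obtain K where K: "finite K" "dist (sum (pmf q) K) 1 \<le> \<eta> / 2"
    using infsum_finite_approximation[of "pmf q" UNIV "\<eta> / 2"] assms by auto
  have "measure q (- K) = 1 - sum (pmf q) K"
    using measure_pmf.prob_compl[of K q] K(1)
    by (simp add: Compl_eq_Diff_UNIV measure_measure_pmf_finite)
  with K assms show ?thesis by (intro exI[of _ K]) (auto simp: dist_real_def abs_if split: if_splits)
qed

lemma measure_bind_pmf_of_set:
  fixes Q :: "'i \<Rightarrow> 'b pmf"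
  assumes "finite I" "I \<noteq> {}"
  shows "measure (bind_pmf (pmf_of_set I) Q) A = (\<Sum>i\<in>I. measure (Q i) A) / card I"
proof -
  have "emeasure (bind_pmf (pmf_of_set I) Q) A = (\<Sum>i\<in>I. emeasure (Q i) A) / card I"
    using assms by (simp add: nn_integral_pmf_of_set)
  also have "\<dots> = (\<Sum>i\<in>I. ennreal (measure (Q i) A)) / ennreal (card I)"
    by (simp add: measure_pmf.emeasure_eq_measure ennreal_of_nat_eq_real_of_nat)
  also have "\<dots> = ennreal ((\<Sum>i\<in>I. measure (Q i) A) / card I)"
    using assms by (simp add: sum_ennreal divide_ennreal sum_nonneg card_gt_0_iff)
  finally show ?thesis
    by (simp add: measure_pmf.emeasure_eq_measure sum_nonneg)
qed

lemma measure_uniform_mixture_le: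
  fixes Q :: "nat \<Rightarrow> 'b pmf"
  assumes "n > 0" "\<delta> \<ge> 0"
    and late: "\<And>i j. j < i \<Longrightarrow> i < n \<Longrightarrow> B \<inter> set_pmf (Q j) \<noteq> {} \<Longrightarrow> measure (Q i) B \<le> \<delta>"
  shows "measure (bind_pmf (pmf_of_set {..<n}) Q) B \<le> 1 / real n + \<delta>"
proof -
  have missed: "measure (Q i) B = 0" if "B \<inter> set_pmf (Q i) = {}" for i
    using that measure_Int_set_pmf[of "Q i" B] by simp
  obtain j where j: "\<And>i. i < n \<Longrightarrow> i \<noteq> j \<Longrightarrow> measure (Q i) B \<le> \<delta>"
  proof (cases "\<exists>j. B \<inter> set_pmf (Q j) \<noteq> {}")
    case True
    then obtain j where hit: "B \<inter> set_pmf (Q j) \<noteq> {}" and first: "\<forall>i<j. B \<inter> set_pmf (Q i) = {}"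
      by (auto simp: exists_least_iff[of "\<lambda>j. B \<inter> set_pmf (Q j) \<noteq> {}"])
    have "measure (Q i) B \<le> \<delta>" if "i < n" "i \<noteq> j" for i
    proof (cases "i < j")
      case True
      then show ?thesis using first missed \<open>\<delta> \<ge> 0\<close> by simp
    next
      case False
      then show ?thesis using late[of j i] hit that by simp
    qed
    then show thesis by (rule that)
  next
    case False
    then show thesis using that missed \<open>\<delta> \<ge> 0\<close> by auto
  qed
  have "(\<Sum>i<n. measure (Q i) B) \<le> (\<Sum>i<n. of_bool (i = j) + \<delta>)"
    using j \<open>\<delta> \<ge> 0\<close> by (intro sum_mono) (auto intro: add_increasing2)
  also have "\<dots> \<le> 1 + real n * \<delta>"
    by (simp add: sum.distrib card_le_Suc0_iff_eq)
  finally have sum_le: "(\<Sum>i<n. measure (Q i) B) \<le> 1 + real n * \<delta>" .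
  have "measure (bind_pmf (pmf_of_set {..<n}) Q) B = (\<Sum>i<n. measure (Q i) B) / real n"
    using \<open>n > 0\<close> measure_bind_pmf_of_set[of "{..<n}" Q B] by (simp add: lessThan_empty_iff)
  also have "\<dots> \<le> (1 + real n * \<delta>) / real n"
    using sum_le by (simp add: divide_right_mono)
  also have "\<dots> = 1 / real n + \<delta>"
    using \<open>n > 0\<close> by (simp add: field_simps)
  finally show ?thesis .
qed

section \<open>Strictly ascending chains of sets\<close>

definition down_closure :: "'b set set \<Rightarrow> 'b set set" where
  "down_closure \<B> = {A. \<exists>B\<in>\<B>. A \<subseteq> B}"

definition strict_extension :: "'b set set \<Rightarrow> ('b set \<times> 'b set) set" where
  "strict_extension \<F> = {(A', A). A \<subset> A' \<and> A' \<in> \<F>}"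

lemma wf_strict_extension:
  assumes "no_strict_ascending_chain \<F>"
  shows "wf (strict_extension \<F>)"
  unfolding wf_iff_no_infinite_down_chain
proof
  assume "\<exists>f. \<forall>i. (f (Suc i), f i) \<in> strict_extension \<F>"
  then obtain f where f: "\<forall>i. (f (Suc i), f i) \<in> strict_extension \<F>" ..
  have "\<exists>A. (\<forall>i. A i \<in> \<F>) \<and> (\<forall>i. A i \<subset> A (Suc i))"
    using f by (intro exI[of _ "\<lambda>i. f (Suc i)"]) (simp add: strict_extension_def)
  with assms show False
    unfolding no_strict_ascending_chain_def by simp
qed

lemma infinite_UN_strict_chain:
  assumes "\<And>i. A i \<subset> A (Suc i)"
  shows "infinite (\<Union>i. A i)"
proof
  assume "finite (\<Union>i. A i)"
  then have "finite (Pow (\<Union>i. A i))" by simp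
  then have "finite (range A)" by (rule finite_subset[rotated]) auto
  moreover have "inj A"
    using assms by (intro strict_mono_imp_inj_on) (simp add: strict_mono_Suc_iff)
  ultimately show False
    using range_inj_infinite by blast
qed

lemma finite_subset_UN_incseq:
  assumes "incseq A" "finite D" "D \<subseteq> (\<Union>i. A i)"
  shows "\<exists>i. D \<subseteq> A i"
  using assms(2,3)
proof (induction D rule: finite_induct)
  case empty
  then show ?case by simp
next
  case (insert x D)
  then obtain i j where "D \<subseteq> A i" "x \<in> A j" by auto
  then have "insert x D \<subseteq> A (max i j)"
    using monoD[OF \<open>incseq A\<close>, of i "max i j"] monoD[OF \<open>incseq A\<close>, of j "max i j"] by auto
  then show ?case by blast
qed

lemma no_strict_ascending_chain_if_ascending_union_closed:
  assumes "\<And>A. A \<in> \<F> \<Longrightarrow> finite A" "ascending_union_closed \<F>"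
  shows "no_strict_ascending_chain \<F>"
  unfolding no_strict_ascending_chain_def
proof
  assume "\<exists>A. (\<forall>i. A i \<in> \<F>) \<and> (\<forall>i. A i \<subset> A (Suc i))"
  then obtain A where "\<And>i. A i \<in> \<F>" "\<And>i. A i \<subset> A (Suc i)" by blast
  then have "(\<Union>i. A i) \<in> \<F>"
    using assms(2) unfolding ascending_union_closed_def by blast
  moreover have "infinite (\<Union>i. A i)"
    by (rule infinite_UN_strict_chain) fact
  ultimately show False using assms(1) by blast
qed

section \<open>Families of finite sets without ascending chains\<close>

text \<open>A superset of \<open>F\<close> either meets the finite set \<open>K\<close> outside \<open>F\<close>, and then contains a
  one-point extension of \<open>F\<close>, or it carries at most the mass of \<open>F\<close> plus the tail outside \<open>K\<close>.\<close>
lemma measure_superset_le_Max: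
  fixes q :: "'b pmf"
  assumes "finite K" "B \<in> \<B>" "F \<subseteq> B"
    and bound: "\<And>m B. m \<in> K - F \<Longrightarrow> B \<in> \<B> \<Longrightarrow> insert m F \<subseteq> B \<Longrightarrow> measure q B \<le> c m"
  shows "measure q B \<le>
    Max (insert (measure q F + measure q (- K)) (c ` {m \<in> K - F. insert m F \<in> down_closure \<B>}))"
    (is "_ \<le> Max ?bounds")
proof -
  have "finite ?bounds"
    using \<open>finite K\<close> by simp
  show ?thesis
  proof (cases "(B - F) \<inter> K = {}")
    case True
    then have "measure q B = measure q F + measure q (B - F)"
      using \<open>F \<subseteq> B\<close> by (simp add: measure_pmf.finite_measure_Diff)
    also have "\<dots> \<le> measure q F + measure q (- K)"
      using True by (intro add_left_mono measure_pmf.finite_measure_mono) auto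
    also have "\<dots> \<le> Max ?bounds"
      using \<open>finite ?bounds\<close> by simp
    finally show ?thesis .
  next
    case False
    then obtain m where m: "m \<in> K - F" "m \<in> B" by blast
    have "m \<in> {m \<in> K - F. insert m F \<in> down_closure \<B>}"
      using m \<open>B \<in> \<B>\<close> \<open>F \<subseteq> B\<close> by (auto simp: down_closure_def)
    then have "c m \<le> Max ?bounds"
      using \<open>finite ?bounds\<close> by (intro Max_ge) auto
    moreover have "measure q B \<le> c m"
      using m bound \<open>B \<in> \<B>\<close> \<open>F \<subseteq> B\<close> by simp
    ultimately show ?thesis by linarith
  qed
qed

lemma exists_max_measure_superset:
  fixes q :: "'b pmf"
  assumes "no_strict_ascending_chain (down_closure \<B>)" and "F \<in> down_closure \<B>"
  shows "\<exists>B0\<in>\<B>. F \<subseteq> B0 \<and> (\<forall>B\<in>\<B>. F \<subseteq> B \<longrightarrow> measure q B \<le> measure q B0)"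
  using assms(2)
proof (induction F rule: wf_induct_rule[OF wf_strict_extension[OF assms(1)]])
  case (1 F)
  define M where "M = (SUP B\<in>{B\<in>\<B>. F \<subseteq> B}. measure q B)"
  obtain B1 where B1: "B1 \<in> \<B>" "F \<subseteq> B1"
    using "1.prems" by (auto simp: down_closure_def)
  show ?case
  proof (rule ccontr)
    assume no_max: "\<not> ?case"
    have below_M: "measure q B < M" if "B \<in> \<B>" "F \<subseteq> B" for B
      unfolding M_def using no_max that
      by (intro less_cSUP_if_not_attained bdd_aboveI[of _ 1]) (auto simp: not_le)
    define \<delta> where "\<delta> = M - measure q F"
    have "measure q F \<le> measure q B1"
      using B1 by (intro measure_pmf.finite_measure_mono) auto
    then have "\<delta> > 0"
      using below_M[OF B1] by (simp add: \<delta>_def)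
    then obtain K where K: "finite K" "measure q (- K) < \<delta> / 2"
      using exists_finite_measure_compl_less[of "\<delta> / 2" q] by auto
    define Km where "Km = {m \<in> K - F. insert m F \<in> down_closure \<B>}"
    have "\<exists>Bm\<in>\<B>. insert m F \<subseteq> Bm \<and> (\<forall>B\<in>\<B>. insert m F \<subseteq> B \<longrightarrow> measure q B \<le> measure q Bm)"
      if "m \<in> Km" for m
      using that "1.IH"[of "insert m F"] by (auto simp: Km_def strict_extension_def)
    then obtain Bm where Bm: "\<And>m. m \<in> Km \<Longrightarrow> Bm m \<in> \<B> \<and> insert m F \<subseteq> Bm m \<and>
        (\<forall>B\<in>\<B>. insert m F \<subseteq> B \<longrightarrow> measure q B \<le> measure q (Bm m))"
      by metis
    define M' where "M' = Max (insert (measure q F + measure q (- K)) ((\<lambda>m. measure q (Bm m)) ` Km))"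
    have "finite Km"
      using K(1) by (simp add: Km_def)
    moreover have "measure q F + measure q (- K) < M"
      using K(2) \<open>\<delta> > 0\<close> by (simp add: \<delta>_def field_simps)
    moreover have "measure q (Bm m) < M" if "m \<in> Km" for m
      using Bm[OF that] below_M by blast
    ultimately have "M' < M"
      by (simp add: M'_def)
    have "measure q B \<le> M'" if "B \<in> \<B>" "F \<subseteq> B" for B
      unfolding M'_def Km_def
    proof (rule measure_superset_le_Max[OF K(1) that])
      fix m B assume "m \<in> K - F" "B \<in> \<B>" "insert m F \<subseteq> B"
      moreover from this have "m \<in> Km"
        by (auto simp: Km_def down_closure_def)
      ultimately show "measure q B \<le> measure q (Bm m)"
        using Bm by blast
    qed
    then have "M \<le> M'"
      unfolding M_def using B1 by (intro cSUP_least) auto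
    with \<open>M' < M\<close> show False by simp
  qed
qed

definition small_on_supersets :: "'b set set \<Rightarrow> 'b set set \<Rightarrow> real \<Rightarrow> 'b pmf \<Rightarrow> bool" where
  "small_on_supersets \<B> G \<epsilon> q \<longleftrightarrow> (\<forall>F\<in>G. \<forall>B\<in>\<B>. F \<subseteq> B \<longrightarrow> measure q B \<le> \<epsilon>)"

definition one_point_extensions :: "'b set set \<Rightarrow> 'b set set \<Rightarrow> 'b set \<Rightarrow> 'b set set" where
  "one_point_extensions \<B> G M = {insert m F | F m. F \<in> G \<and> m \<in> M \<and> insert m F \<in> down_closure \<B>}"

lemma finite_one_point_extensions:
  assumes "finite G" "finite M"
  shows "finite (one_point_extensions \<B> G M)"
proof -
  have "one_point_extensions \<B> G M \<subseteq> (\<lambda>(F, m). insert m F) ` (G \<times> M)"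
    by (auto simp: one_point_extensions_def)
  then show ?thesis
    using assms by (meson finite_SigmaI finite_imageI finite_subset)
qed

lemma one_point_extensions_less_mult:
  assumes "finite G" "G \<noteq> {}" "finite M" "M \<inter> \<Union>(G \<inter> down_closure \<B>) = {}"
  shows "(mset_set (one_point_extensions \<B> G M), mset_set G)
    \<in> mult (strict_extension (down_closure \<B>))"
proof -
  have "({#} + mset_set (one_point_extensions \<B> G M), {#} + mset_set G)
      \<in> mult (strict_extension (down_closure \<B>))"
  proof (rule one_step_implies_mult)
    show "mset_set G \<noteq> {#}"
      using assms(1,2) by (simp add: mset_set_empty_iff)
    show "\<forall>A'\<in>#mset_set (one_point_extensions \<B> G M).
        \<exists>A\<in>#mset_set G. (A', A) \<in> strict_extension (down_closure \<B>)"
    proof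
      fix A' assume "A' \<in># mset_set (one_point_extensions \<B> G M)"
      then obtain F m where "A' = insert m F" "F \<in> G" "m \<in> M" "insert m F \<in> down_closure \<B>"
        using finite_one_point_extensions[OF assms(1,3)] by (auto simp: one_point_extensions_def)
      moreover from this have "F \<in> down_closure \<B>"
        by (auto simp: down_closure_def)
      ultimately show "\<exists>A\<in>#mset_set G. (A', A) \<in> strict_extension (down_closure \<B>)"
        using assms(1,4) by (auto simp: strict_extension_def)
    qed
  qed
  then show ?thesis by simp
qed

lemma small_on_supersets_uniform_mixture:
  fixes Q :: "nat \<Rightarrow> 'b pmf"
  assumes "n > 0" "\<delta> \<ge> 0"
    and Q: "\<And>i. i < n \<Longrightarrow>
      small_on_supersets \<B> (one_point_extensions \<B> G (\<Union>j<i. set_pmf (Q j))) \<delta> (Q i)"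
  shows "small_on_supersets \<B> G (1 / real n + \<delta>) (bind_pmf (pmf_of_set {..<n}) Q)"
  unfolding small_on_supersets_def
proof (intro ballI impI)
  fix F B assume "F \<in> G" "B \<in> \<B>" "F \<subseteq> B"
  show "measure (bind_pmf (pmf_of_set {..<n}) Q) B \<le> 1 / real n + \<delta>"
  proof (rule measure_uniform_mixture_le[OF assms(1,2)])
    fix i j assume "j < i" "i < n" "B \<inter> set_pmf (Q j) \<noteq> {}"
    then obtain m where "m \<in> B" "m \<in> (\<Union>j<i. set_pmf (Q j))" by blast
    then have "insert m F \<in> one_point_extensions \<B> G (\<Union>j<i. set_pmf (Q j))" "insert m F \<subseteq> B"
      using \<open>F \<in> G\<close> \<open>B \<in> \<B>\<close> \<open>F \<subseteq> B\<close> by (auto simp: one_point_extensions_def down_closure_def)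
    then show "measure (Q i) B \<le> \<delta>"
      using Q[OF \<open>i < n\<close>] \<open>B \<in> \<B>\<close> by (auto simp: small_on_supersets_def)
  qed
qed

lemma exists_pmf_small_on_supersets_step:
  fixes G :: "'b set set"
  assumes fin: "\<And>B. B \<in> \<B> \<Longrightarrow> finite B" and "infinite T"
    and "finite G" "G \<noteq> {}" "finite X" "\<epsilon> > 0"
    and smaller: "\<And>G' X' \<epsilon>'. (mset_set G', mset_set G) \<in> mult (strict_extension (down_closure \<B>)) \<Longrightarrow>
      finite G' \<Longrightarrow> finite X' \<Longrightarrow> \<epsilon>' > 0 \<Longrightarrow>
      \<exists>q. finite (set_pmf q) \<and> set_pmf q \<subseteq> T - X' \<and> small_on_supersets \<B> G' \<epsilon>' q"
  shows "\<exists>q. finite (set_pmf q) \<and> set_pmf q \<subseteq> T - X \<and> small_on_supersets \<B> G \<epsilon> q"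
proof -
  \<comment> \<open>Avoiding \<open>X'\<close> makes every one-point extension of a covered \<open>F \<in> G\<close> strict.\<close>
  define X' where "X' = X \<union> \<Union>(G \<inter> down_closure \<B>)"
  have "finite X'"
    using \<open>finite G\<close> \<open>finite X\<close> fin by (auto simp: X'_def down_closure_def intro: finite_subset)
  obtain n :: nat where n: "n > 0" "1 / real n \<le> \<epsilon> / 2"
    using ex_inverse_of_nat_less[of "\<epsilon> / 2"] \<open>\<epsilon> > 0\<close> by (auto simp: inverse_eq_divide)
  define R where "R i Q q \<longleftrightarrow> finite (set_pmf q) \<and> set_pmf q \<subseteq> T - X' \<and>
      small_on_supersets \<B> (one_point_extensions \<B> G (\<Union>j<i. set_pmf (Q j))) (\<epsilon> / 2) q"
    for i and Q :: "nat \<Rightarrow> 'b pmf" and q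
  have "\<exists>q. R k Q q" if earlier: "\<And>i. i < k \<Longrightarrow> R i Q (Q i)" for k Q
  proof -
    let ?M = "\<Union>j<k. set_pmf (Q j)"
    have M: "finite ?M" "?M \<inter> \<Union>(G \<inter> down_closure \<B>) = {}"
      using earlier by (auto simp: R_def X'_def)
    show ?thesis
      using smaller[OF _ finite_one_point_extensions[OF \<open>finite G\<close> M(1)] \<open>finite X'\<close>]
        one_point_extensions_less_mult[OF \<open>finite G\<close> \<open>G \<noteq> {}\<close> M] \<open>\<epsilon> > 0\<close>
      by (simp add: R_def)
  qed
  moreover have "R k Q' q" if "\<And>i. i < k \<Longrightarrow> Q i = Q' i" "R k Q q" for k Q Q' q
    using that by (simp add: R_def)
  ultimately obtain Q where Q: "\<And>i. R i Q (Q i)"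
    using sequential_choice[of R] by blast
  define q where "q = bind_pmf (pmf_of_set {..<n}) Q"
  have set_q: "set_pmf q = (\<Union>i<n. set_pmf (Q i))"
    using n(1) by (simp add: q_def lessThan_empty_iff)
  have "small_on_supersets \<B> G (1 / real n + \<epsilon> / 2) q"
    unfolding q_def using n(1) \<open>\<epsilon> > 0\<close> Q
    by (intro small_on_supersets_uniform_mixture) (auto simp: R_def)
  moreover have "1 / real n + \<epsilon> / 2 \<le> \<epsilon>"
    using n(2) by simp
  ultimately have "small_on_supersets \<B> G \<epsilon> q"
    unfolding small_on_supersets_def by (meson order_trans)
  moreover have "finite (set_pmf q)" "set_pmf q \<subseteq> T - X"
    using Q by (auto simp: set_q R_def X'_def)
  ultimately show ?thesis by blast
qed

lemma exists_pmf_small_on_supersets: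
  assumes fin: "\<And>B. B \<in> \<B> \<Longrightarrow> finite B"
    and chain: "no_strict_ascending_chain (down_closure \<B>)" and "infinite T"
    and "finite G" "finite X" "\<epsilon> > 0"
  shows "\<exists>q. finite (set_pmf q) \<and> set_pmf q \<subseteq> T - X \<and> small_on_supersets \<B> G \<epsilon> q"
proof -
  have "wf (inv_image (mult (strict_extension (down_closure \<B>))) mset_set)"
    using wf_strict_extension[OF chain] by (intro wf_inv_image wf_mult)
  then show ?thesis
    using assms(4-6)
  proof (induction G arbitrary: X \<epsilon> rule: wf_induct_rule)
    case (less G)
    show ?case
    proof (cases "G = {}")
      case True
      have "infinite (T - X)"
        using \<open>infinite T\<close> \<open>finite X\<close> by (rule Diff_infinite_finite[rotated])
      then obtain t where "t \<in> T - X"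
        using infinite_imp_nonempty by blast
      then show ?thesis
        using True by (intro exI[of _ "return_pmf t"]) (simp add: small_on_supersets_def)
    next
      case False
      then show ?thesis
        using exists_pmf_small_on_supersets_step[OF fin \<open>infinite T\<close>] less by simp
    qed
  qed
qed

lemma exists_pmf_uniformly_small:
  assumes "\<And>B. B \<in> \<B> \<Longrightarrow> finite B" "no_strict_ascending_chain (down_closure \<B>)" "infinite T"
    and "\<epsilon> > 0"
  shows "\<exists>q. set_pmf q \<subseteq> T \<and> (\<forall>B\<in>\<B>. measure q B \<le> \<epsilon>)"
  using exists_pmf_small_on_supersets[OF assms(1-3), of "{{}}" "{}" \<epsilon>] assms(4)
  by (auto simp: small_on_supersets_def)

section \<open>The chain conditions of the game\<close>

lemma B1_down_eq_down_closure: "B1_down S T \<pi> = down_closure (B1 S T \<pi>)"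
  by (auto simp: B1_down_def B1_def down_closure_def win_set_def)

lemma not_LNG_free_if_half_graph:
  fixes s :: "nat \<Rightarrow> 'a" and t :: "nat \<Rightarrow> 'b"
  assumes "range s \<subseteq> S" "range t \<subseteq> T" and half_graph: "\<And>i j. \<pi> (s i) (t j) \<longleftrightarrow> j \<le> i"
  shows "\<not> LNG_free S T \<pi>"
proof -
  have diag: "\<pi> (s i) (t i)" for i
    using half_graph by blast
  have "inj t"
  proof (rule injI)
    fix i j assume "t i = t j"
    then have "\<pi> (s i) (t j)" "\<pi> (s j) (t i)"
      using diag[of i] diag[of j] by metis+
    then show "i = j"
      using half_graph[of i j] half_graph[of j i] by (blast intro: le_antisym)
  qed
  moreover have "inj s"
  proof (rule injI)
    fix i j assume "s i = s j"
    then have "\<pi> (s i) (t j)" "\<pi> (s j) (t i)"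
      using diag[of i] diag[of j] by metis+
    then show "i = j"
      using half_graph[of i j] half_graph[of j i] by (blast intro: le_antisym)
  qed
  ultimately show ?thesis
    using assms unfolding LNG_free_def by blast
qed

text \<open>The half graph is built greedily: \<open>t k\<close> avoids the finitely many points won by
  \<open>s 0, \<dots>, s (k - 1)\<close>, and \<open>s k\<close> wins against all of \<open>t 0, \<dots>, t k\<close>.\<close>
lemma exists_half_graph_if_finite_subsets_covered:
  assumes fin: "\<And>s. s \<in> S \<Longrightarrow> finite (win_set T \<pi> s)" and "C \<subseteq> T" "infinite C"
    and covered: "\<And>D. finite D \<Longrightarrow> D \<subseteq> C \<Longrightarrow> \<exists>s\<in>S. D \<subseteq> win_set T \<pi> s"
  shows "\<exists>s t. range s \<subseteq> S \<and> range t \<subseteq> C \<and> (\<forall>i j :: nat. \<pi> (s i) (t j) \<longleftrightarrow> j \<le> i)"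
proof -
  let ?W = "win_set T \<pi>"
  define R where "R k Q x \<longleftrightarrow> fst x \<in> S \<and> snd x \<in> C \<and> snd x \<in> ?W (fst x) \<and>
      (\<forall>j<k. snd x \<notin> ?W (fst (Q j)) \<and> snd (Q j) \<in> ?W (fst x))"
    for k and Q :: "nat \<Rightarrow> 'a \<times> 'b" and x
  have step: "\<exists>x. R k Q x" if earlier: "\<And>i. i < k \<Longrightarrow> R i Q (Q i)" for k Q
  proof -
    have S_C: "fst (Q j) \<in> S" "snd (Q j) \<in> C" if "j < k" for j
      using earlier[OF that] by (simp_all add: R_def)
    then have "finite (\<Union>j<k. ?W (fst (Q j)))"
      by (simp add: fin)
    then have "C - (\<Union>j<k. ?W (fst (Q j))) \<noteq> {}"
      using \<open>infinite C\<close> by (intro infinite_imp_nonempty Diff_infinite_finite)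
    then obtain t where t: "t \<in> C" "\<forall>j<k. t \<notin> ?W (fst (Q j))"
      by blast
    have "finite (insert t (snd ` Q ` {..<k}))" "insert t (snd ` Q ` {..<k}) \<subseteq> C"
      using S_C(2) t(1) by auto
    then obtain s where "s \<in> S" "insert t (snd ` Q ` {..<k}) \<subseteq> ?W s"
      using covered by blast
    then have "R k Q (s, t)"
      using t unfolding R_def by auto
    then show ?thesis ..
  qed
  have prefix: "R k Q' x" if "\<And>i. i < k \<Longrightarrow> Q i = Q' i" "R k Q x" for k Q Q' x
    using that unfolding R_def by auto
  have "\<exists>Q. \<forall>k. R k Q (Q k)"
    by (rule sequential_choice[of R, OF step prefix])
  then obtain Q where Q: "\<And>k. R k Q (Q k)"
    by blast
  define s where "s i = fst (Q i)" for i
  define t where "t i = snd (Q i)" for i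
  have "range s \<subseteq> S" "range t \<subseteq> C"
    using Q by (auto simp: R_def s_def t_def)
  moreover have "\<pi> (s i) (t j) \<longleftrightarrow> j \<le> i" for i j
  proof
    assume "\<pi> (s i) (t j)"
    moreover have "t j \<in> T"
      using Q[of j] \<open>C \<subseteq> T\<close> by (auto simp: R_def t_def)
    ultimately have "t j \<in> ?W (s i)"
      by (simp add: win_set_def)
    then show "j \<le> i"
      using Q[of j] by (auto simp: R_def s_def t_def not_le[symmetric])
  next
    assume "j \<le> i"
    then have "t j \<in> ?W (s i)"
      using Q[of i] by (cases "j = i") (auto simp: R_def s_def t_def)
    then show "\<pi> (s i) (t j)"
      by (simp add: win_set_def)
  qed
  ultimately show ?thesis
    by (intro exI[of _ s] exI[of _ t]) blast
qed

lemma no_strict_ascending_chain_B1_down_if_LNG_free: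
  assumes fin: "\<And>s. s \<in> S \<Longrightarrow> finite (win_set T \<pi> s)" and "LNG_free S T \<pi>"
  shows "no_strict_ascending_chain (B1_down S T \<pi>)"
  unfolding no_strict_ascending_chain_def
proof
  assume "\<exists>A. (\<forall>i. A i \<in> B1_down S T \<pi>) \<and> (\<forall>i. A i \<subset> A (Suc i))"
  then obtain A where A: "\<And>i. A i \<in> B1_down S T \<pi>" "\<And>i. A i \<subset> A (Suc i)" by blast
  have "incseq A"
    using A(2) by (intro incseq_SucI) auto
  have covered: "\<exists>s\<in>S. D \<subseteq> win_set T \<pi> s" if D: "finite D" "D \<subseteq> (\<Union>i. A i)" for D
  proof -
    obtain i where "D \<subseteq> A i"
      using finite_subset_UN_incseq[OF \<open>incseq A\<close> D] by blast
    then show ?thesis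
      using A(1)[of i] by (auto simp: B1_down_def)
  qed
  have "(\<Union>i. A i) \<subseteq> T"
    using A(1) by (auto simp: B1_down_def)
  have "\<exists>s t. range s \<subseteq> S \<and> range t \<subseteq> (\<Union>i. A i) \<and>
      (\<forall>i j :: nat. \<pi> (s i) (t j) \<longleftrightarrow> j \<le> i)"
  proof (rule exists_half_graph_if_finite_subsets_covered)
    show "infinite (\<Union>i. A i)"
      by (rule infinite_UN_strict_chain) (rule A(2))
  qed (fact fin covered \<open>(\<Union>i. A i) \<subseteq> T\<close>)+
  then obtain s t where st: "range s \<subseteq> S" "range t \<subseteq> (\<Union>i. A i)"
      "\<forall>i j :: nat. \<pi> (s i) (t j) \<longleftrightarrow> j \<le> i"
    by blast
  have "range t \<subseteq> T"
    using st(2) \<open>(\<Union>i. A i) \<subseteq> T\<close> by (rule order_trans)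
  with st have "\<not> LNG_free S T \<pi>"
    by (intro not_LNG_free_if_half_graph) auto
  with assms(2) show False by contradiction
qed

lemma no_strict_ascending_chain_B1_down:
  assumes fin: "\<And>s. s \<in> S \<Longrightarrow> finite (win_set T \<pi> s)"
    and "ascending_union_closed (B1_down S T \<pi>) \<or> no_strict_ascending_chain (B1_down S T \<pi>)
         \<or> LNG_free S T \<pi>"
  shows "no_strict_ascending_chain (B1_down S T \<pi>)"
proof -
  have "finite A" if "A \<in> B1_down S T \<pi>" for A
    using that fin by (auto simp: B1_down_def intro: finite_subset)
  then show ?thesis
    using assms(2) no_strict_ascending_chain_if_ascending_union_closed
      no_strict_ascending_chain_B1_down_if_LNG_free[OF fin] by blast
qed

section \<open>Values of the mixed extension\<close>

lemma pi_mix_eq_measure: "pi_mix \<pi> p q = measure (pair_pmf p q) {(s, t). \<pi> s t}"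
proof -
  have "pi_mix \<pi> p q = (\<Sum>\<^sub>\<infinity>x\<in>UNIV. pmf (pair_pmf p q) x * of_bool (case_prod \<pi> x))"
    unfolding pi_mix_def by (intro infsum_cong) (auto simp: pmf_pair)
  also have "\<dots> = (\<Sum>\<^sub>\<infinity>x\<in>{(s, t). \<pi> s t}. pmf (pair_pmf p q) x)"
    by (rule infsum_cong_neutral) auto
  also have "\<dots> = measure (pair_pmf p q) {(s, t). \<pi> s t}"
    by (simp add: measure_pmf_conv_infsetsum infsetsum_infsum pmf_abs_summable)
  finally show ?thesis .
qed

lemma pi_mix_nonneg: "pi_mix \<pi> p q \<ge> 0"
  by (simp add: pi_mix_eq_measure)

lemma pi_mix_le:
  fixes q :: "'b pmf"
  assumes "\<And>s. s \<in> set_pmf p \<Longrightarrow> measure q {t. \<pi> s t} \<le> c"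
  shows "pi_mix \<pi> p q \<le> c"
proof -
  obtain s0 where "s0 \<in> set_pmf p" using set_pmf_not_empty[of p] by blast
  then have "c \<ge> 0" using assms measure_nonneg order_trans by blast
  have "emeasure (pair_pmf p q) {(s, t). \<pi> s t} = (\<integral>\<^sup>+s. emeasure q {t. \<pi> s t} \<partial>p)"
    by (simp add: nn_integral_pair_pmf' flip: nn_integral_indicator) (simp add: indicator_def)
  also have "\<dots> \<le> (\<integral>\<^sup>+s. ennreal c \<partial>p)"
    using assms by (intro nn_integral_mono_AE)
       (auto simp: AE_measure_pmf_iff measure_pmf.emeasure_eq_measure ennreal_leI)
  also have "\<dots> = ennreal c" by (simp add: measure_pmf.emeasure_space_1)
  finally show ?thesis
    using \<open>c \<ge> 0\<close> by (simp add: pi_mix_eq_measure measure_pmf.emeasure_eq_measure)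
qed

lemma pi_mix_le_1: "pi_mix \<pi> p q \<le> 1"
  by (rule pi_mix_le) simp

lemma pi_mix_return_pmf_left: "pi_mix \<pi> (return_pmf s) q = measure q {t. \<pi> s t}"
  by (simp add: pi_mix_eq_measure pair_return_pmf1 vimage_def)

lemma pi_mix_return_pmf_right: "pi_mix \<pi> p (return_pmf t) = measure p {s. \<pi> s t}"
  by (simp add: pi_mix_eq_measure pair_return_pmf2 vimage_def)

lemma return_pmf_in_Delta: "x \<in> X \<Longrightarrow> return_pmf x \<in> Delta X"
  by (simp add: Delta_def)

lemma Delta_nonempty: "X \<noteq> {} \<Longrightarrow> Delta X \<noteq> {}"
  using return_pmf_in_Delta by (metis empty_iff ex_in_conv)

lemma measure_win_set:
  fixes q :: "'b pmf"
  assumes "set_pmf q \<subseteq> T"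
  shows "measure q {t. \<pi> s t} = measure q (win_set T \<pi> s)"
proof -
  have "{t. \<pi> s t} \<inter> set_pmf q = win_set T \<pi> s \<inter> set_pmf q"
    using assms by (auto simp: win_set_def)
  then show ?thesis
    using measure_Int_set_pmf[of q "{t. \<pi> s t}"] measure_Int_set_pmf[of q "win_set T \<pi> s"] by simp
qed

lemma INF_pi_mix_eq_0:
  assumes fin: "\<And>s. s \<in> S \<Longrightarrow> finite (win_set T \<pi> s)" and "infinite T" and "p \<in> Delta S"
  shows "(INF q\<in>Delta T. pi_mix \<pi> p q) = 0"
proof (rule INF_eq_0_if_arbitrarily_small)
  show "Delta T \<noteq> {}"
    using \<open>infinite T\<close> by (simp add: Delta_nonempty infinite_imp_nonempty)
  show "0 \<le> pi_mix \<pi> p q" for q by (rule pi_mix_nonneg)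
  fix \<epsilon> :: real assume "\<epsilon> > 0"
  then obtain K where K: "finite K" "measure p (- K) < \<epsilon>"
    using exists_finite_measure_compl_less by blast
  have "finite (\<Union>(win_set T \<pi> ` (K \<inter> S)))"
    using K(1) fin by auto
  then have "infinite (T - \<Union>(win_set T \<pi> ` (K \<inter> S)))"
    using \<open>infinite T\<close> by (rule Diff_infinite_finite)
  then obtain t where t: "t \<in> T - \<Union>(win_set T \<pi> ` (K \<inter> S))"
    using infinite_imp_nonempty by blast
  have "{s. \<pi> s t} \<inter> set_pmf p \<subseteq> - K"
    using t \<open>p \<in> Delta S\<close> by (auto simp: Delta_def win_set_def)
  then have "pi_mix \<pi> p (return_pmf t) \<le> measure p (- K)"
    using measure_pmf.finite_measure_mono[of "{s. \<pi> s t} \<inter> set_pmf p" "- K" p]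
    by (simp add: pi_mix_return_pmf_right measure_Int_set_pmf)
  then show "\<exists>q\<in>Delta T. pi_mix \<pi> p q \<le> \<epsilon>"
    using K(2) t return_pmf_in_Delta[of t T] by force
qed

lemma SUP_pi_mix_attained:
  assumes chain: "no_strict_ascending_chain (B1_down S T \<pi>)" and "S \<noteq> {}" and "q \<in> Delta T"
  shows "\<exists>s\<in>S. pi_mix \<pi> (return_pmf s) q = (SUP p\<in>Delta S. pi_mix \<pi> p q)"
proof -
  have "{} \<in> down_closure (B1 S T \<pi>)"
    using \<open>S \<noteq> {}\<close> by (auto simp: down_closure_def B1_def)
  then obtain B0 where "B0 \<in> B1 S T \<pi>" and max: "\<forall>B\<in>B1 S T \<pi>. measure q B \<le> measure q B0"
    using exists_max_measure_superset chain unfolding B1_down_eq_down_closure by blast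
  then obtain s0 where "s0 \<in> S" "B0 = win_set T \<pi> s0"
    by (auto simp: B1_def)
  have q_T: "set_pmf q \<subseteq> T"
    using \<open>q \<in> Delta T\<close> by (simp add: Delta_def)
  have "pi_mix \<pi> p q \<le> pi_mix \<pi> (return_pmf s0) q" if "p \<in> Delta S" for p
  proof (rule pi_mix_le)
    fix s assume "s \<in> set_pmf p"
    then have "s \<in> S" using that by (auto simp: Delta_def)
    then show "measure q {t. \<pi> s t} \<le> pi_mix \<pi> (return_pmf s0) q"
      using max \<open>B0 = win_set T \<pi> s0\<close>
      by (simp add: pi_mix_return_pmf_left measure_win_set[OF q_T] B1_def)
  qed
  then have "(SUP p\<in>Delta S. pi_mix \<pi> p q) = pi_mix \<pi> (return_pmf s0) q"
    using return_pmf_in_Delta[OF \<open>s0 \<in> S\<close>] by (intro cSup_eq_maximum) auto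
  then show ?thesis
    using \<open>s0 \<in> S\<close> by auto
qed

lemma INF_SUP_pi_mix_eq_0:
  assumes fin: "\<And>s. s \<in> S \<Longrightarrow> finite (win_set T \<pi> s)"
    and chain: "no_strict_ascending_chain (B1_down S T \<pi>)" and "infinite T" and "S \<noteq> {}"
  shows "(INF q\<in>Delta T. SUP p\<in>Delta S. pi_mix \<pi> p q) = 0"
proof (rule INF_eq_0_if_arbitrarily_small)
  show "Delta T \<noteq> {}"
    using \<open>infinite T\<close> by (simp add: Delta_nonempty infinite_imp_nonempty)
  obtain s0 where "s0 \<in> S"
    using \<open>S \<noteq> {}\<close> by blast
  have bdd: "bdd_above ((\<lambda>p. pi_mix \<pi> p q) ` Delta S)" for q
    using pi_mix_le_1 by (intro bdd_aboveI[of _ 1]) auto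
  show "0 \<le> (SUP p\<in>Delta S. pi_mix \<pi> p q)" for q
    using cSUP_upper2[OF bdd return_pmf_in_Delta[OF \<open>s0 \<in> S\<close>] pi_mix_nonneg] .
  fix \<epsilon> :: real assume "\<epsilon> > 0"
  have "\<And>B. B \<in> B1 S T \<pi> \<Longrightarrow> finite B"
    using fin by (auto simp: B1_def)
  then obtain q where q_T: "set_pmf q \<subseteq> T" and small: "\<forall>B\<in>B1 S T \<pi>. measure q B \<le> \<epsilon>"
    using exists_pmf_uniformly_small chain \<open>infinite T\<close> \<open>\<epsilon> > 0\<close>
    unfolding B1_down_eq_down_closure by blast
  have "pi_mix \<pi> p q \<le> \<epsilon>" if "p \<in> Delta S" for p
  proof (rule pi_mix_le)
    fix s assume "s \<in> set_pmf p"
    then have "s \<in> S" using that by (auto simp: Delta_def)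
    then show "measure q {t. \<pi> s t} \<le> \<epsilon>"
      using small by (simp add: measure_win_set[OF q_T] B1_def)
  qed
  then have "(SUP p\<in>Delta S. pi_mix \<pi> p q) \<le> \<epsilon>"
    using \<open>S \<noteq> {}\<close> by (intro cSUP_least) (auto simp: Delta_nonempty)
  then show "\<exists>q\<in>Delta T. (SUP p\<in>Delta S. pi_mix \<pi> p q) \<le> \<epsilon>"
    using q_T by (auto simp: Delta_def)
qed

theorem corollary2p10:
  fixes S :: "'a set" and T :: "'b set" and \<pi> :: "'a \<Rightarrow> 'b \<Rightarrow> bool"
  assumes "countable_game S T"
    and "\<forall>B\<in>B1 S T \<pi>. finite B"
    and "ascending_union_closed (B1_down S T \<pi>) \<or> no_strict_ascending_chain (B1_down S T \<pi>)
         \<or> LNG_free S T \<pi>"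
  shows "(\<exists>p0\<in>Delta S. (INF q\<in>Delta T. pi_mix \<pi> p0 q) = (SUP p\<in>Delta S. INF q\<in>Delta T. pi_mix \<pi> p q))
    \<and> (SUP p\<in>Delta S. INF q\<in>Delta T. pi_mix \<pi> p q) = 0
    \<and> (\<forall>q\<in>Delta T. \<exists>p0\<in>Delta S. pi_mix \<pi> p0 q = (SUP p\<in>Delta S. pi_mix \<pi> p q))
    \<and> (INF q\<in>Delta T. SUP p\<in>Delta S. pi_mix \<pi> p q) = 0"
proof -
  have fin: "\<And>s. s \<in> S \<Longrightarrow> finite (win_set T \<pi> s)"
    using assms(2) by (simp add: B1_def)
  have "infinite S" "infinite T"
    using assms(1) by (auto simp: countable_game_def)
  then have "S \<noteq> {}" "Delta S \<noteq> {}"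
    by (simp_all add: infinite_imp_nonempty Delta_nonempty)
  have chain: "no_strict_ascending_chain (B1_down S T \<pi>)"
    using no_strict_ascending_chain_B1_down[OF fin assms(3)] .
  have INF_0: "(INF q\<in>Delta T. pi_mix \<pi> p q) = 0" if "p \<in> Delta S" for p
    using INF_pi_mix_eq_0[OF fin \<open>infinite T\<close> that] .
  then have SUP_INF_0: "(SUP p\<in>Delta S. INF q\<in>Delta T. pi_mix \<pi> p q) = 0"
    using \<open>Delta S \<noteq> {}\<close> by (simp cong: SUP_cong)
  have "\<exists>p0\<in>Delta S. pi_mix \<pi> p0 q = (SUP p\<in>Delta S. pi_mix \<pi> p q)" if "q \<in> Delta T" for q
    using SUP_pi_mix_attained[OF chain \<open>S \<noteq> {}\<close> that] return_pmf_in_Delta by fast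
  with INF_0 SUP_INF_0 \<open>Delta S \<noteq> {}\<close> show ?thesis
    using INF_SUP_pi_mix_eq_0[OF fin chain \<open>infinite T\<close> \<open>S \<noteq> {}\<close>] by (auto simp: ex_in_conv)
qed

end
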